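(* Let $G=(V,E)$ and $H$ be graphs such that $H$ is obtained from $G$ by a $Q$-switching with switching set $X$. Let $Y\subseteq V\setminus X$ and let $F$ be a set of edges of $G[X\cup Y]$ with $F\cap E(G_X)=\emptyset$. Then $H[X\cup Y]-F$ is obtained from $G[X\cup Y]-F$ by a $Q$-switching with switching set $X$; in particular these two graphs are cospectral.
   Context: Graphs are finite and simple. $Q$ is a $k\times k$ real orthogonal matrix with no integral rows (no row consisting only of integers). $H$ is obtained from $G$ by a $Q$-switching with switching set $X$ ($|X|=k$) if $H$ has the same vertex set $V$ and, after ordering the vertices with $X$ first, $A_H=M^TA_GM$ with $M=\operatorname{diag}(Q,-I_a,I_b)$ block diagonal, $a+b=|V|-k$. For $S\subseteq V$, $G[S]$ and $H[S]$ denote induced subgraphs; $\Gamma-F$ denotes removal of the edges $F$. The neighborhood graph $G_X$ has vertex set $X\cup N(X)$, where $N(X)$ is the set of vertices adjacent to some vertex of $X$, and edge set the edges of $G$ having at least one endpoint in $X$. Two graphs are cospectral if their adjacency matrices have the same spectrum. *)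

theory Defs
  imports Complex_Main "Jordan_Normal_Form.Char_Poly"
begin

text \<open>A graph is a pair (vertex set, edge set); edges are 2-element subsets of the vertex set.\<close>
type_synonym 'a graph = "'a set \<times> 'a set set"

definition verts :: "'a graph \<Rightarrow> 'a set" where "verts G = fst G"
definition edges :: "'a graph \<Rightarrow> 'a set set" where "edges G = snd G"

definition simple_graph :: "'a graph \<Rightarrow> bool" where
  "simple_graph G \<longleftrightarrow> finite (verts G) \<and>
     (\<forall>e\<in>edges G. e \<subseteq> verts G \<and> card e = 2)"

definition adj :: "'a graph \<Rightarrow> 'a \<Rightarrow> 'a \<Rightarrow> real" where
  "adj G u v = (if {u, v} \<in> edges G then 1 else 0)"

definition induced :: "'a graph \<Rightarrow> 'a set \<Rightarrow> 'a graph" where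
  "induced G S = (S, {e \<in> edges G. e \<subseteq> S})"

definition remove_edges :: "'a graph \<Rightarrow> 'a set set \<Rightarrow> 'a graph" where
  "remove_edges G F = (verts G, edges G - F)"

definition nbhd :: "'a graph \<Rightarrow> 'a set \<Rightarrow> 'a set" where
  "nbhd G X = {v. \<exists>x\<in>X. {x, v} \<in> edges G}"

definition nbhd_graph :: "'a graph \<Rightarrow> 'a set \<Rightarrow> 'a graph" where
  "nbhd_graph G X = (X \<union> nbhd G X, {e \<in> edges G. e \<inter> X \<noteq> {}})"

definition orthogonal_on :: "'a set \<Rightarrow> ('a \<Rightarrow> 'a \<Rightarrow> real) \<Rightarrow> bool" where
  "orthogonal_on X Q \<longleftrightarrow>
     (\<forall>i\<in>X. \<forall>j\<in>X. (\<Sum>k\<in>X. Q i k * Q j k) = (if i = j then 1 else 0))"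

definition no_integral_rows :: "'a set \<Rightarrow> ('a \<Rightarrow> 'a \<Rightarrow> real) \<Rightarrow> bool" where
  "no_integral_rows X Q \<longleftrightarrow> (\<forall>i\<in>X. \<exists>j\<in>X. Q i j \<notin> \<int>)"

text \<open>The block matrix M = diag(Q, -I_a, I_b), indexed by vertices; s gives the sign
  (-1 or 1) of each vertex outside X.\<close>
definition switch_mat :: "('a \<Rightarrow> 'a \<Rightarrow> real) \<Rightarrow> 'a set \<Rightarrow> ('a \<Rightarrow> real) \<Rightarrow> 'a \<Rightarrow> 'a \<Rightarrow> real" where
  "switch_mat Q X s w u =
     (if w \<in> X \<and> u \<in> X then Q w u else if w = u \<and> u \<notin> X then s u else 0)"

definition Q_switching :: "'a graph \<Rightarrow> 'a graph \<Rightarrow> ('a \<Rightarrow> 'a \<Rightarrow> real) \<Rightarrow> 'a set \<Rightarrow> bool" where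
  "Q_switching G H Q X \<longleftrightarrow>
     simple_graph G \<and> simple_graph H \<and> verts H = verts G \<and> X \<subseteq> verts G \<and>
     orthogonal_on X Q \<and> no_integral_rows X Q \<and>
     (\<exists>s. (\<forall>v\<in>verts G - X. s v = -1 \<or> s v = 1) \<and>
        (\<forall>u\<in>verts G. \<forall>v\<in>verts G.
           adj H u v = (\<Sum>w\<in>verts G. \<Sum>z\<in>verts G.
                          switch_mat Q X s w u * adj G w z * switch_mat Q X s z v)))"

definition vertex_list :: "'a graph \<Rightarrow> 'a list" where
  "vertex_list G = (SOME vs. distinct vs \<and> set vs = verts G)"

definition adj_matrix :: "'a graph \<Rightarrow> real mat" where
  "adj_matrix G = (let vs = vertex_list G in
     mat (length vs) (length vs) (\<lambda>(i, j). adj G (vs ! i) (vs ! j)))"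

definition spectrum_mult :: "real mat \<Rightarrow> real \<Rightarrow> nat" where
  "spectrum_mult A = (\<lambda>x. order x (char_poly A))"

definition cospectral :: "'a graph \<Rightarrow> 'a graph \<Rightarrow> bool" where
  "cospectral G H \<longleftrightarrow> spectrum_mult (adj_matrix G) = spectrum_mult (adj_matrix H)"

end

theory Submission
  imports Defs
begin

text \<open>
  Write \<open>M = diag(Q, s)\<close>, so that \<open>A\<^sub>H = M\<^sup>T A\<^sub>G M\<close>. Since \<open>M\<close> is block diagonal with
  \<open>X\<close> inside a single block, the congruence \<open>M\<^sup>T A M\<close> restricts to every vertex set
  \<open>S \<supseteq> X\<close>. An edge \<open>{u, v}\<close> disjoint from \<open>X\<close> meets \<open>M\<close> only in the diagonal entries
  \<open>s u, s v\<close>, so deleting it from \<open>G\<close> changes \<open>M\<^sup>T A\<^sub>G M\<close> only in the entries \<open>(u, v)\<close> and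
  \<open>(v, u)\<close>, where it deletes the same edge from \<open>H\<close>. Cospectrality holds for every
  \<open>Q\<close>-switching because \<open>M\<close> is orthogonal, so \<open>A\<^sub>H\<close> is similar to \<open>A\<^sub>G\<close>.
\<close>

definition congr_on :: "'a set \<Rightarrow> ('a \<Rightarrow> 'a \<Rightarrow> 'b::comm_semiring_0) \<Rightarrow> ('a \<Rightarrow> 'a \<Rightarrow> 'b) \<Rightarrow> 'a \<Rightarrow> 'a \<Rightarrow> 'b"
  where "congr_on V P A u v = (\<Sum>w\<in>V. \<Sum>z\<in>V. P w u * A w z * P z v)"

lemma Q_switching_iff:
  "Q_switching G H Q X \<longleftrightarrow>
     simple_graph G \<and> simple_graph H \<and> verts H = verts G \<and> X \<subseteq> verts G \<and>
     orthogonal_on X Q \<and> no_integral_rows X Q \<and>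
     (\<exists>s. (\<forall>v\<in>verts G - X. s v = -1 \<or> s v = 1) \<and>
        (\<forall>u\<in>verts G. \<forall>v\<in>verts G.
           adj H u v = congr_on (verts G) (switch_mat Q X s) (adj G) u v))"
  by (simp add: Q_switching_def congr_on_def)

lemma congr_on_cong:
  assumes "\<And>w z. w \<in> V \<Longrightarrow> z \<in> V \<Longrightarrow> P w u \<noteq> 0 \<Longrightarrow> P z v \<noteq> 0 \<Longrightarrow> A w z = A' w z"
  shows "congr_on V P A u v = congr_on V P A' u v"
  unfolding congr_on_def by (intro sum.cong refl) (use assms in force)

lemma congr_on_subset:
  assumes "finite V" "S \<subseteq> V" "\<And>w. w \<in> V - S \<Longrightarrow> P w u = 0 \<and> P w v = 0"
  shows "congr_on V P A u v = congr_on S P A u v"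
  unfolding congr_on_def
proof (rule sum.mono_neutral_cong_right[OF assms(1,2)])
  show "\<forall>w\<in>V - S. (\<Sum>z\<in>V. P w u * A w z * P z v) = 0"
    using assms(3) by simp
  show "(\<Sum>z\<in>V. P w u * A w z * P z v) = (\<Sum>z\<in>S. P w u * A w z * P z v)" for w
    by (rule sum.mono_neutral_right[OF assms(1,2)]) (use assms(3) in simp)
qed

definition mat_of_fun :: "'a list \<Rightarrow> ('a \<Rightarrow> 'a \<Rightarrow> 'b) \<Rightarrow> 'b mat" where
  "mat_of_fun vs f = mat (length vs) (length vs) (\<lambda>(i, j). f (vs ! i) (vs ! j))"

lemma sum_nth_distinct:
  assumes "distinct vs"
  shows "(\<Sum>i<length vs. f (vs ! i)) = sum f (set vs)"
  using sum.reindex_bij_betw[OF bij_betw_nth[OF assms, of "{..<length vs}" "set vs"], of f]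
  by simp

lemma mat_of_fun_carrier: "mat_of_fun vs f \<in> carrier_mat (length vs) (length vs)"
  by (simp add: mat_of_fun_def)

lemma mat_of_fun_cong:
  "(\<And>u v. u \<in> set vs \<Longrightarrow> v \<in> set vs \<Longrightarrow> f u v = g u v) \<Longrightarrow> mat_of_fun vs f = mat_of_fun vs g"
  unfolding mat_of_fun_def by (intro eq_matI) auto

lemma transpose_mat_of_fun: "transpose_mat (mat_of_fun vs f) = mat_of_fun vs (\<lambda>u v. f v u)"
  unfolding mat_of_fun_def by (intro eq_matI) auto

lemma mat_of_fun_mult:
  fixes f g :: "'a \<Rightarrow> 'a \<Rightarrow> 'b::comm_semiring_0"
  assumes "distinct vs"
  shows "mat_of_fun vs f * mat_of_fun vs g = mat_of_fun vs (\<lambda>u v. \<Sum>w\<in>set vs. f u w * g w v)"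
  unfolding mat_of_fun_def
  by (intro eq_matI) (auto simp: scalar_prod_def atLeast0LessThan intro: sum_nth_distinct[OF assms])

lemma mat_of_fun_delta:
  assumes "distinct vs"
  shows "mat_of_fun vs (\<lambda>u v. if u = v then 1 else 0) = 1\<^sub>m (length vs)"
  unfolding mat_of_fun_def using assms by (intro eq_matI) (auto simp: nth_eq_iff_index_eq)

lemma mat_of_fun_congr_on:
  assumes "distinct vs"
  shows "transpose_mat (mat_of_fun vs P) * mat_of_fun vs A * mat_of_fun vs P
       = mat_of_fun vs (congr_on (set vs) P A)"
proof -
  have eq: "(\<lambda>u v. \<Sum>z\<in>set vs. (\<Sum>w\<in>set vs. P w u * A w z) * P z v) = congr_on (set vs) P A"
    unfolding congr_on_def by (intro ext, subst sum.swap) (simp add: sum_distrib_right)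
  show ?thesis
    unfolding transpose_mat_of_fun mat_of_fun_mult[OF assms] eq by (rule refl)
qed

lemma char_poly_orthogonal_congr:
  fixes A B P :: "'a \<Rightarrow> 'a \<Rightarrow> real"
  assumes vs: "distinct vs"
    and orth: "orthogonal_on (set vs) P"
    and B: "\<And>u v. u \<in> set vs \<Longrightarrow> v \<in> set vs \<Longrightarrow> B u v = congr_on (set vs) P A u v"
  shows "char_poly (mat_of_fun vs A) = char_poly (mat_of_fun vs B)"
proof -
  let ?n = "length vs" and ?P = "mat_of_fun vs P"
  have "?P * transpose_mat ?P = mat_of_fun vs (\<lambda>u v. if u = v then 1 else 0)"
    using orth unfolding transpose_mat_of_fun mat_of_fun_mult[OF vs] orthogonal_on_def
    by (intro mat_of_fun_cong) simp
  then have PPt: "?P * transpose_mat ?P = 1\<^sub>m ?n"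
    by (simp add: mat_of_fun_delta[OF vs])
  have PtP: "transpose_mat ?P * ?P = 1\<^sub>m ?n"
    by (rule mat_mult_left_right_inverse[OF _ _ PPt]) (auto simp: mat_of_fun_carrier)
  have BPAP: "mat_of_fun vs B = transpose_mat ?P * mat_of_fun vs A * ?P"
    using B by (simp add: mat_of_fun_congr_on[OF vs] cong: mat_of_fun_cong)
  have "similar_mat (mat_of_fun vs B) (mat_of_fun vs A)"
    by (rule similar_matI[OF _ PtP PPt BPAP]) (auto simp: mat_of_fun_carrier)
  then show ?thesis
    by (simp add: char_poly_similar)
qed

lemma switch_mat_eq_0: "w \<noteq> u \<Longrightarrow> w \<notin> X \<or> u \<notin> X \<Longrightarrow> switch_mat Q X s w u = 0"
  by (auto simp: switch_mat_def)

lemma orthogonal_on_switch_mat: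
  assumes orth: "orthogonal_on X Q" and "X \<subseteq> S" "finite S"
    and sign: "\<And>v. v \<in> S - X \<Longrightarrow> s v = -1 \<or> s v = 1"
  shows "orthogonal_on S (switch_mat Q X s)"
  unfolding orthogonal_on_def
proof (intro ballI)
  fix u v assume uv: "u \<in> S" "v \<in> S"
  show "(\<Sum>w\<in>S. switch_mat Q X s u w * switch_mat Q X s v w) = (if u = v then 1 else 0)"
  proof (cases "u \<in> X \<and> v \<in> X")
    case True
    have "(\<Sum>w\<in>S. switch_mat Q X s u w * switch_mat Q X s v w) = (\<Sum>w\<in>X. Q u w * Q v w)"
      using True \<open>X \<subseteq> S\<close> \<open>finite S\<close>
      by (intro sum.mono_neutral_cong_right) (auto simp: switch_mat_def)
    with orth True show ?thesis
      unfolding orthogonal_on_def by simp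
  next
    case False
    then have "(\<Sum>w\<in>S. switch_mat Q X s u w * switch_mat Q X s v w)
             = (\<Sum>w\<in>S. if w = u then (if u = v then s u * s u else 0) else 0)"
      by (intro sum.cong refl) (auto simp: switch_mat_def)
    also have "\<dots> = (if u = v then s u * s u else 0)"
      using uv \<open>finite S\<close> by simp
    also have "\<dots> = (if u = v then 1 else 0)"
      using False sign[of u] uv by auto
    finally show ?thesis .
  qed
qed

lemma congr_on_switch_mat_subset:
  assumes "finite V" "X \<subseteq> S" "S \<subseteq> V" "u \<in> S" "v \<in> S"
  shows "congr_on V (switch_mat Q X s) A u v = congr_on S (switch_mat Q X s) A u v"
  using assms by (intro congr_on_subset) (auto simp: switch_mat_def)

lemma congr_on_switch_mat_outside:
  assumes "finite S" "u \<in> S" "v \<in> S" "u \<notin> X" "v \<notin> X"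
  shows "congr_on S (switch_mat Q X s) A u v = s u * A u v * s v"
proof -
  have "switch_mat Q X s w u * A w z * switch_mat Q X s z v
      = (if z = v then if w = u then s u * A u v * s v else 0 else 0)" for w z
    using assms by (simp add: switch_mat_def)
  then show ?thesis
    using assms by (simp add: congr_on_def)
qed

lemma congr_on_switch_mat_cong:
  assumes "\<And>w z. w \<in> S \<Longrightarrow> z \<in> S \<Longrightarrow> A w z \<noteq> A' w z \<Longrightarrow> w \<notin> X \<and> z \<notin> X \<and> (w, z) \<noteq> (u, v)"
  shows "congr_on S (switch_mat Q X s) A u v = congr_on S (switch_mat Q X s) A' u v"
proof (rule congr_on_cong)
  fix w z assume "w \<in> S" "z \<in> S" "switch_mat Q X s w u \<noteq> 0" "switch_mat Q X s z v \<noteq> 0"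
  then show "A w z = A' w z"
    using assms[of w z] switch_mat_eq_0[of w u X Q s] switch_mat_eq_0[of z v X Q s] by auto
qed

lemma verts_remove_edges_induced: "verts (remove_edges (induced G S) F) = S"
  by (simp add: remove_edges_def induced_def verts_def)

lemma simple_graph_remove_edges_induced:
  "simple_graph G \<Longrightarrow> S \<subseteq> verts G \<Longrightarrow> simple_graph (remove_edges (induced G S) F)"
  by (auto simp: simple_graph_def remove_edges_def induced_def verts_def edges_def
      intro: finite_subset)

lemma adj_remove_edges_induced:
  "u \<in> S \<Longrightarrow> v \<in> S \<Longrightarrow>
     adj (remove_edges (induced G S) F) u v = (if {u, v} \<in> F then 0 else adj G u v)"
  by (simp add: adj_def remove_edges_def induced_def edges_def)

lemma vertex_list:
  "finite (verts G) \<Longrightarrow> distinct (vertex_list G) \<and> set (vertex_list G) = verts G"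
  unfolding vertex_list_def by (rule someI_ex) (use finite_distinct_list in auto)

lemma adj_matrix_eq_mat_of_fun: "adj_matrix G = mat_of_fun (vertex_list G) (adj G)"
  by (simp add: adj_matrix_def mat_of_fun_def Let_def)

lemma Q_switching_cospectral:
  assumes "Q_switching G H Q X"
  shows "cospectral G H"
proof -
  obtain s where sign: "\<forall>v\<in>verts G - X. s v = -1 \<or> s v = 1"
    and adj_H: "\<forall>u\<in>verts G. \<forall>v\<in>verts G.
                   adj H u v = congr_on (verts G) (switch_mat Q X s) (adj G) u v"
    using assms unfolding Q_switching_iff by blast
  have fin: "finite (verts G)" and "verts H = verts G" and X: "X \<subseteq> verts G"
    and orth: "orthogonal_on X Q"
    using assms by (auto simp: Q_switching_iff simple_graph_def)
  then have vs: "vertex_list H = vertex_list G"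
    by (simp add: vertex_list_def)
  have "orthogonal_on (verts G) (switch_mat Q X s)"
    by (intro orthogonal_on_switch_mat[OF orth X fin]) (use sign in blast)
  then have "char_poly (adj_matrix G) = char_poly (adj_matrix H)"
    unfolding adj_matrix_eq_mat_of_fun vs
    using vertex_list[OF fin] adj_H by (intro char_poly_orthogonal_congr) auto
  then show ?thesis
    by (simp add: cospectral_def spectrum_mult_def)
qed

lemma Q_switching_remove_edges_induced:
  assumes switch: "Q_switching G H Q X" and "X \<subseteq> S" "S \<subseteq> verts G"
    and F: "\<forall>e\<in>F. e \<inter> X = {}"
  shows "Q_switching (remove_edges (induced G S) F) (remove_edges (induced H S) F) Q X"
proof -
  let ?G = "remove_edges (induced G S) F" and ?H = "remove_edges (induced H S) F"
  obtain s where sign: "\<forall>v\<in>verts G - X. s v = -1 \<or> s v = 1"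
    and adj_H: "\<forall>u\<in>verts G. \<forall>v\<in>verts G.
                   adj H u v = congr_on (verts G) (switch_mat Q X s) (adj G) u v"
    using switch unfolding Q_switching_iff by blast
  have fin_V: "finite (verts G)"
    using switch by (simp add: Q_switching_iff simple_graph_def)
  with \<open>S \<subseteq> verts G\<close> have fin: "finite S"
    by (rule finite_subset)
  have "adj ?H u v = congr_on S (switch_mat Q X s) (adj ?G) u v" if uv: "u \<in> S" "v \<in> S" for u v
  proof (cases "{u, v} \<in> F")
    case True
    then have "u \<notin> X" "v \<notin> X"
      using F by auto
    with True uv fin show ?thesis
      by (simp add: adj_remove_edges_induced congr_on_switch_mat_outside)
  next
    case False
    have "adj ?H u v = adj H u v"
      using False uv by (simp add: adj_remove_edges_induced)
    also have "\<dots> = congr_on (verts G) (switch_mat Q X s) (adj G) u v"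
      using adj_H uv assms(3) by auto
    also have "\<dots> = congr_on S (switch_mat Q X s) (adj G) u v"
      by (rule congr_on_switch_mat_subset[OF fin_V assms(2,3) uv])
    also have "\<dots> = congr_on S (switch_mat Q X s) (adj ?G) u v"
      using False F uv
      by (intro congr_on_switch_mat_cong) (auto simp: adj_remove_edges_induced split: if_splits)
    finally show ?thesis .
  qed
  then show ?thesis
    using switch assms(2,3) sign unfolding Q_switching_iff verts_remove_edges_induced
    by (auto intro!: exI[of _ s] simple_graph_remove_edges_induced)
qed

theorem lemma3p3:
  fixes G H :: "'a graph" and Q :: "'a \<Rightarrow> 'a \<Rightarrow> real" and X Y :: "'a set"
    and F :: "'a set set"
  assumes "Q_switching G H Q X"
    and "Y \<subseteq> verts G - X"
    and "F \<subseteq> edges (induced G (X \<union> Y))"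
    and "F \<inter> edges (nbhd_graph G X) = {}"
  shows "Q_switching (remove_edges (induced G (X \<union> Y)) F)
                     (remove_edges (induced H (X \<union> Y)) F) Q X
         \<and> cospectral (remove_edges (induced G (X \<union> Y)) F)
                      (remove_edges (induced H (X \<union> Y)) F)"
proof -
  have "X \<union> Y \<subseteq> verts G"
    using assms(1,2) by (auto simp: Q_switching_iff)
  moreover have "\<forall>e\<in>F. e \<inter> X = {}"
    using assms(3,4) by (auto simp: induced_def nbhd_graph_def edges_def)
  ultimately have "Q_switching (remove_edges (induced G (X \<union> Y)) F)
                               (remove_edges (induced H (X \<union> Y)) F) Q X"
    using assms(1) by (intro Q_switching_remove_edges_induced) auto
  then show ?thesis
    using Q_switching_cospectral by blast
qed

end
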